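(* Fix $c>0$, let $\Phi\in\Omega(n,\lfloor c2^n\rfloor)$, and let $t=t(n)$ be integers with $n-c\sqrt n\le t(n)\le n$. Let $E_t$ be the event that PUR reaches stage $t$ and for every $j$ with $t\le j\le n$, \[N_n-(n-t)\left[1+\frac{2(N_n-1)}{t}\right]\le N_j\le N_n .\] Then $\Pr[E_t\mid \text{PUR reaches stage }t]=1-o(1)$ as $n\to\infty$.
   Context: Horn clauses, $\mathcal H_n$ and $\Omega(n,m)$: $\mathcal H_n$ is the set of pairs $(P,S)$ with $P\in\{\emptyset,\{1\},\dots,\{n\}\}$, $S\subseteq\{1,\dots,n\}$, $(P,S)\ne(\emptyset,\emptyset)$, representing the Horn clause $\bigvee_{i\in P}x_i\vee\bigvee_{j\in S}\neg x_j$ (so $|\mathcal H_n|\sim n2^n$; the paper writes this number as $(n+2)2^n-1$); $\Omega(n,m)$ is the distribution of the conjunction of $m$ clauses drawn independently, uniformly with repetition from $\mathcal H_n$. Algorithm PUR on a Horn formula $\Phi$ (multiset of clauses): if $\Phi$ has no positive unit clause (single literal $x_i$), accept. Otherwise choose uniformly at random a positive unit clause $x_i$; if $\Phi$ contains the clause $\neg x_i$, reject; otherwise set $x_i=1$ (delete clauses containing $x_i$, delete $\neg x_i$ from the others) and recurse. Stages: stage $t$ is the iteration performed when exactly $t$ variables are unassigned (first iteration = stage $n$). PUR reaches stage $t$ if it neither accepted nor rejected at stages $n,\dots,t+1$. $\Phi_t$ is the formula at the beginning of stage $t$, $N_t$ its number of clauses (so $N_n=\lfloor c2^n\rfloor$).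 *)

theory Defs
  imports "HOL-Probability.Probability" "HOL-Library.Multiset"
begin

text \<open>A Horn clause is a pair (P, S): P is the set of positive literals (empty or a
singleton), S the set of negated variables. A formula is a multiset of clauses.\<close>

type_synonym clause = "nat set \<times> nat set"
type_synonym formula = "clause multiset"

definition horn_clauses :: "nat \<Rightarrow> clause set" where
  "horn_clauses n = {(P, S). (P = {} \<or> (\<exists>i\<in>{1..n}. P = {i})) \<and> S \<subseteq> {1..n}
                        \<and> (P, S) \<noteq> ({}, {})}"

definition Omega :: "nat \<Rightarrow> nat \<Rightarrow> formula pmf" where
  "Omega n m = map_pmf mset (replicate_pmf m (pmf_of_set (horn_clauses n)))"

definition pos_units :: "formula \<Rightarrow> nat set" where
  "pos_units \<Phi> = {i. ({i}, {}) \<in># \<Phi>}"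

definition assign_true :: "nat \<Rightarrow> formula \<Rightarrow> formula" where
  "assign_true i \<Phi> = image_mset (\<lambda>(P, S). (P, S - {i})) (filter_mset (\<lambda>(P, S). i \<notin> P) \<Phi>)"

text \<open>PUR started at stage k (k unassigned variables) on formula Phi. The result is the
trajectory [Phi_k, Phi_(k-1), ..., Phi_s], the formulas at the beginning of every stage
that is reached, s being the stage at which PUR accepts or rejects.\<close>
primrec PUR_traj :: "nat \<Rightarrow> formula \<Rightarrow> formula list pmf" where
  "PUR_traj 0 \<Phi> = return_pmf [\<Phi>]"
| "PUR_traj (Suc k) \<Phi> =
     (if pos_units \<Phi> = {} then return_pmf [\<Phi>]
      else bind_pmf (pmf_of_set (pos_units \<Phi>))
             (\<lambda>i. if ({}, {i}) \<in># \<Phi> then return_pmf [\<Phi>]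
                  else map_pmf ((#) \<Phi>) (PUR_traj k (assign_true i \<Phi>))))"

definition PUR_run :: "real \<Rightarrow> nat \<Rightarrow> formula list pmf" where
  "PUR_run c n = bind_pmf (Omega n (nat \<lfloor>c * 2 ^ n\<rfloor>)) (PUR_traj n)"

definition reaches :: "nat \<Rightarrow> nat \<Rightarrow> formula list \<Rightarrow> bool" where
  "reaches n t tr \<longleftrightarrow> t \<le> n \<and> n - t < length tr"

definition Nstage :: "nat \<Rightarrow> formula list \<Rightarrow> nat \<Rightarrow> real" where
  "Nstage n tr j = real (size (tr ! (n - j)))"

definition event_E :: "nat \<Rightarrow> nat \<Rightarrow> formula list \<Rightarrow> bool" where
  "event_E n t tr \<longleftrightarrow> reaches n t tr \<and>
     (\<forall>j\<in>{t..n}. Nstage n tr n - real (n - t) * (1 + 2 * (Nstage n tr n - 1) / real t)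
                     \<le> Nstage n tr j
                 \<and> Nstage n tr j \<le> Nstage n tr n)"

end

theory Submission
  imports Defs "HOL-Real_Asymp.Real_Asymp"
begin

text \<open>
  Each iteration of PUR deletes exactly the clauses whose positive literal is the variable
  set to true, so if no variable occurs positively in more than M clauses of the initial
  formula, then deterministically N_n - (n - j) M \<le> N_j \<le> N_n. Taking M = \<lfloor>2 N_n / n\<rfloor>,
  which is below the slack 1 + 2 (N_n - 1) / t of the theorem, a moment bound shows that
  some variable exceeds M occurrences with probability at most n exp(-N_n / (3 n)).
  On the other hand, PUR reaches stage t at least with the probability that the formula
  consists of the chain x_n, x_(n-1) \<or> \<not>x_n, ..., x_(t+1) \<or> \<not>x_(t+2) followed by clauses that
  each contain some \<not>x_s with s \<le> t, which is roughly ((n+1) 2^n)^(-c \<surd>n) exp(-4 c 2^(c \<surd>n)).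
  The first bound decays like exp(-c 2^n / (3 n)), much faster than the second, so the
  conditional probability of E_t tends to 1.
\<close>

section \<open>Uniform sampling with repetition\<close>

lemma measure_bind_pmf_of_set:
  assumes "finite H" "H \<noteq> {}"
  shows "measure_pmf.prob (bind_pmf (pmf_of_set H) F) X
           = (\<Sum>x\<in>H. measure_pmf.prob (F x) X) / card H"
proof -
  have "measure_pmf.prob (bind_pmf (pmf_of_set H) F) X
          = (\<integral>x. measure_pmf.prob (F x) X \<partial>measure_pmf (pmf_of_set H))"
    unfolding measure_pmf_bind
    by (rule measure_pmf.measure_bind[where N="count_space UNIV"])
       (auto intro: measurable_measure_pmf simp: measure_pmf_in_subprob_algebra)
  also have "\<dots> = (\<Sum>x\<in>H. measure_pmf.prob (F x) X) / card H"
    using assms by (simp add: integral_pmf_of_set)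
  finally show ?thesis .
qed

lemma replicate_pmf_Suc_conv_map:
  "replicate_pmf (Suc N) p = bind_pmf p (\<lambda>x. map_pmf ((#) x) (replicate_pmf N p))"
  by (simp add: map_pmf_def)

lemma prob_replicate_pmf_of_set_nth_in:
  assumes "finite H" "H \<noteq> {}"
  shows "measure_pmf.prob (replicate_pmf N (pmf_of_set H)) {xs. \<forall>k<N. xs ! k \<in> A k}
           = (\<Prod>k<N. card (H \<inter> A k) / card H)"
proof (induction N arbitrary: A)
  case 0
  then show ?case by simp
next
  case (Suc N)
  let ?R = "replicate_pmf N (pmf_of_set H)"
  have cons_vimage: "(#) x -` {xs. \<forall>k<Suc N. xs ! k \<in> A k}
                       = (if x \<in> A 0 then {xs. \<forall>k<N. xs ! k \<in> A (Suc k)} else {})" for x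
    by (auto simp: less_Suc_eq_0_disj nth_Cons split: nat.splits)
  have "measure_pmf.prob (replicate_pmf (Suc N) (pmf_of_set H)) {xs. \<forall>k<Suc N. xs ! k \<in> A k}
          = (\<Sum>x\<in>H. measure_pmf.prob ?R ((#) x -` {xs. \<forall>k<Suc N. xs ! k \<in> A k})) / card H"
    unfolding replicate_pmf_Suc_conv_map using assms by (simp add: measure_bind_pmf_of_set)
  also have "\<dots> = (\<Sum>x\<in>H. if x \<in> A 0 then measure_pmf.prob ?R {xs. \<forall>k<N. xs ! k \<in> A (Suc k)} else 0)
                   / card H"
    by (intro arg_cong2[where f="(/)"] sum.cong refl) (subst cons_vimage, simp)
  also have "\<dots> = card (H \<inter> A 0) / card H * (\<Prod>k<N. card (H \<inter> A (Suc k)) / card H)"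
    using Suc[of "\<lambda>k. A (Suc k)"] assms by (simp add: sum.If_cases)
  also have "\<dots> = (\<Prod>k<Suc N. card (H \<inter> A k) / card H)"
    by (subst prod.lessThan_Suc_shift) simp
  finally show ?case .
qed

text \<open>Markov's inequality for 2^X, where X counts the hits and E[2^X] = (1 + |H \<inter> Q| / |H|)^N.\<close>

lemma prob_replicate_pmf_of_set_count_ge:
  assumes "finite H" "H \<noteq> {}"
  shows "measure_pmf.prob (replicate_pmf N (pmf_of_set H)) {xs. r \<le> length (filter Q xs)}
           \<le> (1 + card (H \<inter> {x. Q x}) / card H) ^ N / 2 ^ r"
proof (induction N arbitrary: r)
  case 0
  then show ?case by (cases r) auto
next
  case (Suc N)
  define q where "q = card (H \<inter> {x. Q x}) / card H"
  define F where "F r = measure_pmf.prob (replicate_pmf N (pmf_of_set H))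
                          {xs. r \<le> length (filter Q xs)}" for r
  have IH: "F r \<le> (1 + q) ^ N / 2 ^ r" for r
    using Suc unfolding F_def q_def by blast
  have q01: "0 \<le> q" "q \<le> 1"
    using assms unfolding q_def by (auto simp: card_mono divide_le_eq_1)
  show ?case
  proof (cases r)
    case 0
    have "(1::real) \<le> (1 + q) ^ Suc N" using q01 by (intro one_le_power) simp
    then show ?thesis using 0 q_def by (simp add: order_trans[OF measure_pmf.prob_le_1])
  next
    case (Suc r')
    have split_card: "real (card (H \<inter> - {x. Q x})) = real (card H) - card (H \<inter> {x. Q x})"
      using card_Int_Diff[OF assms(1), of "{x. Q x}"] by (simp add: Diff_eq)
    have "measure_pmf.prob (replicate_pmf (Suc N) (pmf_of_set H)) {xs. r \<le> length (filter Q xs)}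
            = (\<Sum>x\<in>H. measure_pmf.prob (replicate_pmf N (pmf_of_set H))
                         ((#) x -` {xs. r \<le> length (filter Q xs)})) / card H"
      unfolding replicate_pmf_Suc_conv_map using assms by (simp add: measure_bind_pmf_of_set)
    also have "\<dots> = (\<Sum>x\<in>H. if Q x then F r' else F r) / card H"
      by (intro arg_cong2[where f="(/)"] sum.cong) (auto simp: F_def Suc)
    also have "\<dots> = (card (H \<inter> {x. Q x}) * F r' + card (H \<inter> - {x. Q x}) * F r) / card H"
      by (simp add: sum.If_cases[OF assms(1)])
    also have "\<dots> = q * F r' + (1 - q) * F r"
      using assms unfolding split_card q_def by (simp add: field_simps)
    also have "\<dots> \<le> q * ((1 + q) ^ N / 2 ^ r') + (1 - q) * ((1 + q) ^ N / 2 ^ r)"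
      using q01 IH by (intro add_mono mult_left_mono) auto
    also have "\<dots> = (1 + q) ^ Suc N / 2 ^ r"
      using Suc by (simp add: field_simps)
    finally show ?thesis unfolding q_def .
  qed
qed

section \<open>Counting Horn clauses\<close>

definition horn_heads :: "nat \<Rightarrow> nat set set" where
  "horn_heads n = insert {} ((\<lambda>i. {i}) ` {1..n})"

lemma card_horn_heads: "card (horn_heads n) \<le> n + 1"
proof -
  have "card ((\<lambda>i::nat. {i}) ` {1..n}) \<le> n"
    using card_image_le[of "{1..n}" "\<lambda>i::nat. {i}"] by simp
  then show ?thesis unfolding horn_heads_def by (simp add: card_insert_if)
qed

lemma horn_clauses_subset: "horn_clauses n \<subseteq> horn_heads n \<times> Pow {1..n}"
  unfolding horn_clauses_def horn_heads_def by auto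

lemma finite_horn_clauses: "finite (horn_clauses n)"
  by (rule finite_subset[OF horn_clauses_subset]) (simp add: horn_heads_def)

lemma card_horn_clauses_le: "card (horn_clauses n) \<le> (n + 1) * 2 ^ n"
proof -
  have "card (horn_clauses n) \<le> card (horn_heads n \<times> Pow {1..n})"
    by (rule card_mono[OF _ horn_clauses_subset]) (simp add: horn_heads_def)
  also have "\<dots> = card (horn_heads n) * 2 ^ n"
    by (simp add: card_cartesian_product card_Pow)
  also have "\<dots> \<le> (n + 1) * 2 ^ n"
    using card_horn_heads[of n] by (intro mult_right_mono) simp_all
  finally show ?thesis .
qed

lemma card_horn_clauses_ge: "n * 2 ^ n \<le> card (horn_clauses n)"
proof -
  have "((\<lambda>i. {i}) ` {1..n}) \<times> Pow {1..n} \<subseteq> horn_clauses n"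
    unfolding horn_clauses_def by auto
  from card_mono[OF finite_horn_clauses this] show ?thesis
    by (simp add: card_cartesian_product card_Pow card_image inj_on_def)
qed

lemma horn_clauses_nonempty: "n \<ge> 1 \<Longrightarrow> horn_clauses n \<noteq> {}"
  using card_horn_clauses_ge[of n] by (auto simp: Suc_le_eq)

lemma card_horn_clauses_with_head: "card (horn_clauses n \<inter> {c. i \<in> fst c}) \<le> 2 ^ n"
proof -
  have "horn_clauses n \<inter> {c. i \<in> fst c} \<subseteq> {{i}} \<times> Pow {1..n}"
    unfolding horn_clauses_def by auto
  from card_mono[OF _ this] show ?thesis by (simp add: card_cartesian_product card_Pow)
qed

lemma card_horn_clauses_negated_above:
  "card (horn_clauses n \<inter> {c. \<forall>s\<in>snd c. T < s}) \<le> (n + 1) * 2 ^ (n - T)"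
proof -
  have "horn_clauses n \<inter> {c. \<forall>s\<in>snd c. T < s} \<subseteq> horn_heads n \<times> Pow {Suc T..n}"
    using horn_clauses_subset[of n] by fastforce
  then have "card (horn_clauses n \<inter> {c. \<forall>s\<in>snd c. T < s}) \<le> card (horn_heads n \<times> Pow {Suc T..n})"
    by (intro card_mono) (auto simp: horn_heads_def)
  also have "\<dots> = card (horn_heads n) * 2 ^ (n - T)"
    by (simp add: card_cartesian_product card_Pow)
  also have "\<dots> \<le> (n + 1) * 2 ^ (n - T)"
    using card_horn_heads[of n] by (intro mult_right_mono) simp_all
  finally show ?thesis .
qed

lemma set_pmf_replicate_horn_clauses:
  "n \<ge> 1 \<Longrightarrow> set_pmf (replicate_pmf N (pmf_of_set (horn_clauses n)))
                = {xs. set xs \<subseteq> horn_clauses n \<and> length xs = N}"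
  by (auto simp: set_replicate_pmf finite_horn_clauses horn_clauses_nonempty)

lemma set_pmf_Omega:
  assumes "n \<ge> 1" "\<Phi> \<in> set_pmf (Omega n N)"
  shows "set_mset \<Phi> \<subseteq> horn_clauses n" "size \<Phi> = N"
  using assms by (auto simp: Omega_def set_pmf_replicate_horn_clauses)

lemma horn_clauses_with_head_fraction_le:
  assumes "n \<ge> 1"
  shows "card (horn_clauses n \<inter> {c. i \<in> fst c}) / card (horn_clauses n) \<le> 1 / n"
proof -
  have "real (card (horn_clauses n \<inter> {c. i \<in> fst c})) \<le> real (2 ^ n)"
    "real (n * 2 ^ n) \<le> card (horn_clauses n)"
    using card_horn_clauses_with_head[of n i] card_horn_clauses_ge[of n] unfolding of_nat_le_iff .
  then have "card (horn_clauses n \<inter> {c. i \<in> fst c}) / card (horn_clauses n)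
               \<le> 2 ^ n / (real n * 2 ^ n)"
    using assms by (intro frac_le) auto
  then show ?thesis by simp
qed

lemma one_div_card_horn_clauses_ge:
  assumes "n \<ge> 1"
  shows "1 / ((real n + 1) * 2 ^ n) \<le> 1 / card (horn_clauses n)"
proof -
  have "card (horn_clauses n) \<le> real ((n + 1) * 2 ^ n)"
    using card_horn_clauses_le[of n] unfolding of_nat_le_iff .
  moreover have "0 < real (card (horn_clauses n))"
    using horn_clauses_nonempty[OF assms] finite_horn_clauses[of n] by (simp add: card_gt_0_iff)
  ultimately show ?thesis
    by (intro divide_left_mono mult_pos_pos) (auto simp: algebra_simps)
qed

lemma horn_clauses_negated_below_fraction_ge:
  assumes n: "n \<ge> 1"
  shows "1 - (real n + 1) * 2 ^ (n - T) / (real n * 2 ^ n)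
           \<le> card (horn_clauses n \<inter> {c. \<exists>s\<in>snd c. s \<le> T}) / card (horn_clauses n)"
proof -
  define H where "H = horn_clauses n"
  define G where "G = {c::clause. \<exists>s\<in>snd c. s \<le> T}"
  have card_pos: "0 < real (card H)"
    using n by (simp add: H_def card_gt_0_iff finite_horn_clauses horn_clauses_nonempty)
  have "card H = card (H \<inter> G) + card (H - G)"
    unfolding H_def by (rule card_Int_Diff[OF finite_horn_clauses])
  then have split: "real (card H) = card (H \<inter> G) + card (H - G)" by simp
  have "H - G = horn_clauses n \<inter> {c. \<forall>s\<in>snd c. T < s}"
    unfolding H_def G_def by (auto simp: not_le)
  then have "real (card (H - G)) \<le> real ((n + 1) * 2 ^ (n - T))"
    using card_horn_clauses_negated_above[of n T] unfolding of_nat_le_iff by simp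
  then have G_large: "real (card H) - (real n + 1) * 2 ^ (n - T) \<le> card (H \<inter> G)"
    using split by (simp add: algebra_simps)
  have "real (n * 2 ^ n) \<le> card H"
    using card_horn_clauses_ge[of n] unfolding H_def of_nat_le_iff .
  then have "real n * 2 ^ n \<le> card H" by simp
  then have "(real n + 1) * 2 ^ (n - T) / card H \<le> (real n + 1) * 2 ^ (n - T) / (real n * 2 ^ n)"
    using card_pos n by (intro divide_left_mono mult_pos_pos) auto
  then have "1 - (real n + 1) * 2 ^ (n - T) / (real n * 2 ^ n)
               \<le> 1 - (real n + 1) * 2 ^ (n - T) / card H"
    by linarith
  also have "\<dots> = (card H - (real n + 1) * 2 ^ (n - T)) / card H"
    using card_pos by (simp add: diff_divide_distrib)
  also have "\<dots> \<le> card (H \<inter> G) / card H"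
    using G_large card_pos by (intro divide_right_mono) auto
  finally show ?thesis unfolding H_def G_def .
qed

section \<open>Deterministic behaviour of PUR\<close>

definition pos_occ :: "nat \<Rightarrow> formula \<Rightarrow> nat" where
  "pos_occ i \<Phi> = size (filter_mset (\<lambda>c. i \<in> fst c) \<Phi>)"

lemma pos_occ_mset: "pos_occ i (mset xs) = length (filter (\<lambda>c. i \<in> fst c) xs)"
  unfolding pos_occ_def by (simp flip: mset_filter)

lemma size_assign_true: "size (assign_true i \<Phi>) + pos_occ i \<Phi> = size \<Phi>"
  unfolding assign_true_def pos_occ_def by (induction \<Phi>) auto

lemma pos_occ_assign_true_le: "pos_occ j (assign_true i \<Phi>) \<le> pos_occ j \<Phi>"
  unfolding assign_true_def pos_occ_def by (induction \<Phi>) auto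

lemma finite_pos_units: "finite (pos_units \<Phi>)"
proof -
  have "pos_units \<Phi> = (\<lambda>i. ({i}, {})) -` set_mset \<Phi>"
    unfolding pos_units_def by auto
  then show ?thesis by (auto intro: finite_vimageI injI)
qed

lemma set_pmf_PUR_traj_Suc:
  assumes "tr \<in> set_pmf (PUR_traj (Suc k) \<Phi>)"
  shows "tr = [\<Phi>] \<or> (\<exists>i\<in>pos_units \<Phi>. \<exists>tr'. tr = \<Phi> # tr'
                         \<and> tr' \<in> set_pmf (PUR_traj k (assign_true i \<Phi>)))"
  using assms finite_pos_units[of \<Phi>]
  by (auto simp: set_bind_pmf split: if_splits)

lemma PUR_traj_nth_0:
  assumes "tr \<in> set_pmf (PUR_traj k \<Phi>)"
  shows "tr \<noteq> [] \<and> tr ! 0 = \<Phi>"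
proof (cases k)
  case (Suc k')
  show ?thesis using set_pmf_PUR_traj_Suc[OF assms[unfolded Suc]] by auto
qed (use assms in simp)

lemma PUR_traj_size_bounds:
  assumes "tr \<in> set_pmf (PUR_traj k \<Phi>)" "\<And>i. pos_occ i \<Phi> \<le> M" "j < length tr"
  shows "size (tr ! j) \<le> size \<Phi> \<and> size \<Phi> \<le> size (tr ! j) + j * M"
  using assms
proof (induction k arbitrary: \<Phi> tr j)
  case 0
  then show ?case by simp
next
  case (Suc k)
  from set_pmf_PUR_traj_Suc[OF Suc.prems(1)] show ?case
  proof
    assume "tr = [\<Phi>]"
    then show ?thesis using Suc.prems by simp
  next
    assume "\<exists>i\<in>pos_units \<Phi>. \<exists>tr'. tr = \<Phi> # tr' \<and> tr' \<in> set_pmf (PUR_traj k (assign_true i \<Phi>))"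
    then obtain i tr' where tr: "tr = \<Phi> # tr'"
      and tr': "tr' \<in> set_pmf (PUR_traj k (assign_true i \<Phi>))" by blast
    show ?thesis
    proof (cases j)
      case 0
      then show ?thesis using tr by simp
    next
      case (Suc j')
      have "pos_occ i' (assign_true i \<Phi>) \<le> M" for i'
        using pos_occ_assign_true_le[of i' i \<Phi>] Suc.prems(2)[of i'] by linarith
      moreover have "j' < length tr'" using Suc.prems(3) tr Suc by simp
      ultimately have "size (tr' ! j') \<le> size (assign_true i \<Phi>)"
        "size (assign_true i \<Phi>) \<le> size (tr' ! j') + j' * M"
        using Suc.IH[OF tr'] by auto
      then show ?thesis
        using size_assign_true[of i \<Phi>] Suc.prems(2)[of i] tr Suc by simp
    qed
  qed
qed

lemma event_E_if_pos_occ_le: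
  assumes tr: "tr \<in> set_pmf (PUR_traj n \<Phi>)" and reach: "reaches n T tr"
    and occ: "\<And>i. pos_occ i \<Phi> \<le> M"
    and M: "real M \<le> 1 + 2 * (real (size \<Phi>) - 1) / real T"
  shows "event_E n T tr"
proof -
  have Nn: "Nstage n tr n = size \<Phi>"
    using PUR_traj_nth_0[OF tr] unfolding Nstage_def by simp
  have "Nstage n tr n - real (n - T) * (1 + 2 * (Nstage n tr n - 1) / real T) \<le> Nstage n tr j
        \<and> Nstage n tr j \<le> Nstage n tr n" if j: "j \<in> {T..n}" for j
  proof -
    have "n - j < length tr" using j reach unfolding reaches_def by auto
    from PUR_traj_size_bounds[OF tr occ this]
    have "size (tr ! (n - j)) \<le> size \<Phi>" "real (size \<Phi>) \<le> size (tr ! (n - j)) + real (n - j) * M"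
      by (auto simp flip: of_nat_mult of_nat_add)
    moreover have "real (n - j) * M \<le> real (n - T) * (1 + 2 * (real (size \<Phi>) - 1) / real T)"
      using j M by (intro mult_mono) auto
    ultimately show ?thesis unfolding Nn unfolding Nstage_def by linarith
  qed
  then show ?thesis unfolding event_E_def using reach by blast
qed

section \<open>Forcing PUR through a chain of unit propagations\<close>

definition assign_all_true :: "nat set \<Rightarrow> formula \<Rightarrow> formula" where
  "assign_all_true A \<Phi> = image_mset (\<lambda>(P, S). (P, S - A)) (filter_mset (\<lambda>(P, S). P \<inter> A = {}) \<Phi>)"

lemma assign_all_true_empty: "assign_all_true {} \<Phi> = \<Phi>"
  unfolding assign_all_true_def by (induction \<Phi>) auto

lemma assign_true_assign_all_true:
  "assign_true i (assign_all_true A \<Phi>) = assign_all_true (insert i A) \<Phi>"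
  unfolding assign_true_def assign_all_true_def filter_mset_image_mset filter_filter_mset
    multiset.map_comp
  by (intro arg_cong2[where f=image_mset] ext filter_mset_cong0) (auto simp: case_prod_unfold)

definition chain_clause :: "nat \<Rightarrow> nat \<Rightarrow> clause" where
  "chain_clause n k = (if k = n then ({n}, {}) else ({k}, {Suc k}))"

lemma chain_clause_in_horn_clauses: "1 \<le> k \<Longrightarrow> k \<le> n \<Longrightarrow> chain_clause n k \<in> horn_clauses n"
  unfolding chain_clause_def horn_clauses_def by auto

text \<open>
  In a chain formula PUR is forced to set x_n, x_(n-1), ..., x_(T+1) to true in this order:
  every other clause keeps a literal \<not>x_s with s \<le> T and so cannot become a unit clause.
\<close>

definition chain_formula :: "nat \<Rightarrow> nat \<Rightarrow> formula \<Rightarrow> bool" where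
  "chain_formula n T \<Phi> \<longleftrightarrow> (\<forall>k. T < k \<longrightarrow> k \<le> n \<longrightarrow> chain_clause n k \<in># \<Phi>) \<and>
     (\<forall>c. c \<in># \<Phi> \<longrightarrow> (\<exists>k. T < k \<and> k \<le> n \<and> c = chain_clause n k) \<or> (\<exists>s\<in>snd c. s \<le> T))"

lemma chain_formula_mset:
  assumes len: "n - T \<le> length xs"
    and chain: "\<And>k. k < n - T \<Longrightarrow> xs ! k = chain_clause n (Suc T + k)"
    and other: "\<And>k. n - T \<le> k \<Longrightarrow> k < length xs \<Longrightarrow> \<exists>s\<in>snd (xs ! k). s \<le> T"
  shows "chain_formula n T (mset xs)"
proof -
  have "chain_clause n k \<in># mset xs" if "T < k" "k \<le> n" for k
  proof -
    have j: "k - Suc T < length xs" using that len by auto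
    have "xs ! (k - Suc T) = chain_clause n k" using chain[of "k - Suc T"] that by auto
    then show ?thesis using nth_mem[OF j] by simp
  qed
  moreover have "(\<exists>k. T < k \<and> k \<le> n \<and> c = chain_clause n k) \<or> (\<exists>s\<in>snd c. s \<le> T)"
    if "c \<in># mset xs" for c
  proof -
    from that obtain j where j: "j < length xs" "c = xs ! j" by (auto simp: in_set_conv_nth)
    show ?thesis
    proof (cases "j < n - T")
      case True
      then show ?thesis using chain[OF True] j by (intro disjI1 exI[of _ "Suc T + j"]) auto
    next
      case False
      then show ?thesis using other[of j] j by auto
    qed
  qed
  ultimately show ?thesis unfolding chain_formula_def by blast
qed

lemma chain_formula_clause_cases:
  assumes \<Phi>: "chain_formula n T \<Phi>" and k: "T < k" "k \<le> n"
    and PS: "(P, S) \<in># \<Phi>" "P \<inter> {Suc k..n} = {}"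
  shows "(P, S - {Suc k..n}) = ({k}, {}) \<or> (P \<noteq> {} \<and> S - {Suc k..n} \<noteq> {})
           \<or> (\<exists>s\<in>S - {Suc k..n}. s \<le> T)"
  using \<Phi> PS(1) unfolding chain_formula_def
proof (elim conjE allE[of _ "(P, S)"] impE disjE exE)
  fix k' assume "T < k'" "k' \<le> n" "(P, S) = chain_clause n k'"
  then show ?thesis
    using PS(2) k by (cases "k' < k") (auto simp: chain_clause_def split: if_splits)
qed (use k in auto)

lemma chain_formula_units:
  assumes \<Phi>: "chain_formula n T \<Phi>" and k: "T < k" "k \<le> n"
  shows "pos_units (assign_all_true {Suc k..n} \<Phi>) = {k}"
    and "({}, {k}) \<notin># assign_all_true {Suc k..n} \<Phi>"
proof -
  let ?A = "{Suc k..n}"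
  have mem: "c \<in># assign_all_true ?A \<Phi> \<longleftrightarrow> (\<exists>P S. (P, S) \<in># \<Phi> \<and> P \<inter> ?A = {} \<and> c = (P, S - ?A))"
    for c
    unfolding assign_all_true_def by auto
  note cases = chain_formula_clause_cases[OF \<Phi> k]
  show "pos_units (assign_all_true ?A \<Phi>) = {k}"
  proof (intro set_eqI iffI)
    fix i assume "i \<in> pos_units (assign_all_true ?A \<Phi>)"
    then obtain P S where "(P, S) \<in># \<Phi>" "P \<inter> ?A = {}" "({i}, {}) = (P, S - ?A)"
      unfolding pos_units_def mem by blast
    then show "i \<in> {k}" using cases[of P S] by auto
  next
    fix i assume "i \<in> {k}"
    moreover have "chain_clause n k \<in># \<Phi>" using \<Phi> k unfolding chain_formula_def by blast
    ultimately show "i \<in> pos_units (assign_all_true ?A \<Phi>)"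
      unfolding pos_units_def mem using k
      by (intro CollectI exI[of _ "fst (chain_clause n k)"] exI[of _ "snd (chain_clause n k)"])
         (auto simp: chain_clause_def)
  qed
  show "({}, {k}) \<notin># assign_all_true ?A \<Phi>"
  proof
    assume "({}, {k}) \<in># assign_all_true ?A \<Phi>"
    then obtain P S where "(P, S) \<in># \<Phi>" "P \<inter> ?A = {}" "({}, {k}) = (P, S - ?A)"
      unfolding mem by blast
    then have "(P, S) \<in># \<Phi>" "P \<inter> ?A = {}" "P = {}" "S - ?A = {k}" by auto
    then show False using cases[of P S] k by auto
  qed
qed

lemma PUR_traj_chain_formula_length:
  assumes \<Phi>: "chain_formula n T \<Phi>"
  shows "T + d \<le> n \<Longrightarrow> tr \<in> set_pmf (PUR_traj (T + d) (assign_all_true {Suc (T + d)..n} \<Phi>))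
           \<Longrightarrow> d < length tr"
proof (induction d arbitrary: tr)
  case 0
  then show ?case using PUR_traj_nth_0 by fastforce
next
  case (Suc d)
  define k where "k = T + Suc d"
  have k: "T < k" "k \<le> n" using Suc.prems unfolding k_def by auto
  have "assign_true k (assign_all_true {Suc k..n} \<Phi>) = assign_all_true {Suc (T + d)..n} \<Phi>"
    unfolding assign_true_assign_all_true k_def using k(2) k_def
    by (simp add: atLeastAtMost_insertL)
  then have "PUR_traj (T + Suc d) (assign_all_true {Suc k..n} \<Phi>)
      = map_pmf ((#) (assign_all_true {Suc k..n} \<Phi>))
          (PUR_traj (T + d) (assign_all_true {Suc (T + d)..n} \<Phi>))"
    using chain_formula_units[OF \<Phi> k] unfolding k_def
    by (simp add: pmf_of_set_singleton bind_return_pmf)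
  with Suc.prems(2) obtain tr' where "tr = assign_all_true {Suc k..n} \<Phi> # tr'"
    "tr' \<in> set_pmf (PUR_traj (T + d) (assign_all_true {Suc (T + d)..n} \<Phi>))"
    unfolding k_def by auto
  with Suc.IH[of tr'] Suc.prems(1) show ?case by simp
qed

lemma reaches_if_chain_formula:
  assumes "chain_formula n T \<Phi>" "T \<le> n" "tr \<in> set_pmf (PUR_traj n \<Phi>)"
  shows "reaches n T tr"
  using PUR_traj_chain_formula_length[OF assms(1), of "n - T" tr] assms(2,3)
  by (simp add: assign_all_true_empty reaches_def)

section \<open>Probability estimates\<close>

lemma power_mult_power_le_prod_if:
  fixes a q :: real
  assumes "m \<le> N" "0 \<le> a" "0 \<le> q" "q \<le> 1"
  shows "a ^ m * q ^ N \<le> (\<Prod>k<N. if k < m then a else q)"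
proof -
  have "{..<N} \<inter> {k. k < m} = {..<m}" "{..<N} \<inter> - {k. k < m} = {m..<N}"
    using assms(1) by auto
  then have prod: "(\<Prod>k<N. if k < m then a else q) = a ^ m * q ^ (N - m)"
    by (simp add: prod.If_cases)
  have "a ^ m * q ^ N \<le> a ^ m * q ^ (N - m)"
    using assms by (intro mult_left_mono power_decreasing) auto
  then show ?thesis unfolding prod .
qed

lemma prob_Omega_ge_prod:
  assumes n: "n \<ge> 1"
    and P: "\<And>xs. length xs = N \<Longrightarrow> \<forall>k<N. xs ! k \<in> A k \<Longrightarrow> P (mset xs)"
  shows "(\<Prod>k<N. card (horn_clauses n \<inter> A k) / card (horn_clauses n))
           \<le> measure_pmf.prob (Omega n N) {\<Phi>. P \<Phi>}"
proof -
  let ?R = "replicate_pmf N (pmf_of_set (horn_clauses n))"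
  have H: "finite (horn_clauses n)" "horn_clauses n \<noteq> {}"
    using n by (simp_all add: finite_horn_clauses horn_clauses_nonempty)
  have "(\<Prod>k<N. card (horn_clauses n \<inter> A k) / card (horn_clauses n))
          = measure_pmf.prob ?R {xs. \<forall>k<N. xs ! k \<in> A k}"
    by (rule prob_replicate_pmf_of_set_nth_in[OF H, symmetric])
  also have "\<dots> \<le> measure_pmf.prob ?R (mset -` {\<Phi>. P \<Phi>})"
  proof (rule measure_pmf.finite_measure_mono_AE)
    show "AE xs in ?R. xs \<in> {xs. \<forall>k<N. xs ! k \<in> A k} \<longrightarrow> xs \<in> mset -` {\<Phi>. P \<Phi>}"
      using n P by (auto intro!: AE_pmfI simp: set_pmf_replicate_horn_clauses)
  qed simp
  also have "\<dots> = measure_pmf.prob (Omega n N) {\<Phi>. P \<Phi>}"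
    by (simp add: Omega_def)
  finally show ?thesis .
qed

text \<open>
  A chain formula arises when the first n - T clauses drawn are the chain clauses and every
  later one contains some \<not>x_s with s \<le> T.
\<close>

lemma prob_chain_formula_ge:
  assumes n: "n \<ge> 1" and N: "n - T \<le> N"
    and x: "(real n + 1) * 2 ^ (n - T) / (real n * 2 ^ n) \<le> 1"
  shows "(1 / ((real n + 1) * 2 ^ n)) ^ (n - T)
           * (1 - (real n + 1) * 2 ^ (n - T) / (real n * 2 ^ n)) ^ N
           \<le> measure_pmf.prob (Omega n N) {\<Phi>. chain_formula n T \<Phi>}"
proof -
  define m where "m = n - T"
  define q where "q = 1 - (real n + 1) * 2 ^ m / (real n * 2 ^ n)"
  define A where "A k = (if k < m then {chain_clause n (Suc T + k)} else {c. \<exists>s\<in>snd c. s \<le> T})"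
    for k
  have q: "0 \<le> q" "q \<le> 1" using x unfolding q_def m_def by simp_all
  have density: "(if k < m then 1 / ((real n + 1) * 2 ^ n) else q)
                   \<le> card (horn_clauses n \<inter> A k) / card (horn_clauses n)" for k
  proof (cases "k < m")
    case True
    then have "chain_clause n (Suc T + k) \<in> horn_clauses n"
      unfolding m_def by (intro chain_clause_in_horn_clauses) auto
    then show ?thesis
      using True one_div_card_horn_clauses_ge[OF n] unfolding A_def by simp
  next
    case False
    then show ?thesis
      using horn_clauses_negated_below_fraction_ge[OF n, of T] unfolding A_def q_def m_def
      by simp
  qed
  have "(1 / ((real n + 1) * 2 ^ n)) ^ m * q ^ N
          \<le> (\<Prod>k<N. if k < m then 1 / ((real n + 1) * 2 ^ n) else q)"
    using N q unfolding m_def by (intro power_mult_power_le_prod_if) auto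
  also have "\<dots> \<le> (\<Prod>k<N. card (horn_clauses n \<inter> A k) / card (horn_clauses n))"
    using density q by (intro prod_mono) auto
  also have "\<dots> \<le> measure_pmf.prob (Omega n N) {\<Phi>. chain_formula n T \<Phi>}"
  proof (rule prob_Omega_ge_prod[OF n])
    fix xs :: "clause list" assume xs: "length xs = N" "\<forall>k<N. xs ! k \<in> A k"
    show "chain_formula n T (mset xs)"
    proof (rule chain_formula_mset)
      show "n - T \<le> length xs" using xs N by simp
      show "xs ! k = chain_clause n (Suc T + k)" if "k < n - T" for k
        using xs(2)[rule_format, of k] that N xs(1) unfolding A_def m_def by auto
      show "\<exists>s\<in>snd (xs ! k). s \<le> T" if "n - T \<le> k" "k < length xs" for k
        using xs(2)[rule_format, of k] that xs(1) unfolding A_def m_def by auto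
    qed
  qed
  finally show ?thesis unfolding q_def m_def .
qed

lemma prob_pos_occ_gt_le:
  assumes n: "n \<ge> 1"
  shows "measure_pmf.prob (Omega n N) {\<Phi>. M < pos_occ i \<Phi>} \<le> (1 + 1 / n) ^ N / 2 ^ Suc M"
proof -
  have H: "finite (horn_clauses n)" "horn_clauses n \<noteq> {}"
    using n by (simp_all add: finite_horn_clauses horn_clauses_nonempty)
  have "measure_pmf.prob (Omega n N) {\<Phi>. M < pos_occ i \<Phi>}
          = measure_pmf.prob (replicate_pmf N (pmf_of_set (horn_clauses n)))
              {xs. Suc M \<le> length (filter (\<lambda>c. i \<in> fst c) xs)}"
    by (simp add: Omega_def pos_occ_mset Suc_le_eq)
  also have "\<dots> \<le> (1 + card (horn_clauses n \<inter> {c. i \<in> fst c}) / card (horn_clauses n)) ^ N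
                   / 2 ^ Suc M"
    by (rule prob_replicate_pmf_of_set_count_ge[OF H])
  also have "\<dots> \<le> (1 + 1 / n) ^ N / 2 ^ Suc M"
    using horn_clauses_with_head_fraction_le[OF n, of i]
    by (intro divide_right_mono power_mono) auto
  finally show ?thesis .
qed

lemma prob_ex_pos_occ_gt_le:
  assumes n: "n \<ge> 1"
  shows "measure_pmf.prob (Omega n N) {\<Phi>. \<exists>i. M < pos_occ i \<Phi>} \<le> n * (1 + 1 / n) ^ N / 2 ^ Suc M"
proof -
  have "measure_pmf.prob (Omega n N) {\<Phi>. \<exists>i. M < pos_occ i \<Phi>}
          \<le> measure_pmf.prob (Omega n N) (\<Union>i\<in>{1..n}. {\<Phi>. M < pos_occ i \<Phi>})"
  proof (rule measure_pmf.finite_measure_mono_AE)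
    show "AE \<Phi> in Omega n N. \<Phi> \<in> {\<Phi>. \<exists>i. M < pos_occ i \<Phi>}
                             \<longrightarrow> \<Phi> \<in> (\<Union>i\<in>{1..n}. {\<Phi>. M < pos_occ i \<Phi>})"
    proof (rule AE_pmfI, intro impI)
      fix \<Phi> assume \<Phi>: "\<Phi> \<in> set_pmf (Omega n N)" and "\<Phi> \<in> {\<Phi>. \<exists>i. M < pos_occ i \<Phi>}"
      then obtain i where i: "M < pos_occ i \<Phi>" by auto
      then obtain c where "c \<in># \<Phi>" "i \<in> fst c"
        unfolding pos_occ_def by (cases "filter_mset (\<lambda>c. i \<in> fst c) \<Phi> = {#}") auto
      then have "i \<in> {1..n}"
        using set_pmf_Omega(1)[OF n \<Phi>] unfolding horn_clauses_def by auto
      then show "\<Phi> \<in> (\<Union>i\<in>{1..n}. {\<Phi>. M < pos_occ i \<Phi>})" using i by auto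
    qed
  qed simp
  also have "\<dots> \<le> (\<Sum>i\<in>{1..n}. measure_pmf.prob (Omega n N) {\<Phi>. M < pos_occ i \<Phi>})"
    by (rule measure_pmf.finite_measure_subadditive_finite) auto
  also have "\<dots> \<le> (\<Sum>i\<in>{1..n}. (1 + 1 / n) ^ N / 2 ^ Suc M)"
    by (intro sum_mono prob_pos_occ_gt_le[OF n])
  also have "\<dots> = n * (1 + 1 / n) ^ N / 2 ^ Suc M" by simp
  finally show ?thesis .
qed

lemma map_pmf_nth_0_bind_PUR_traj: "map_pmf (\<lambda>tr. tr ! 0) (bind_pmf p (PUR_traj k)) = p"
proof -
  have "map_pmf (\<lambda>tr. tr ! 0) (PUR_traj k \<Phi>) = return_pmf \<Phi>" for \<Phi>
    using PUR_traj_nth_0[of _ k \<Phi>] by (simp add: map_pmf_eq_return_pmf_iff)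
  then show ?thesis by (simp add: map_bind_pmf bind_return_pmf')
qed

lemma prob_bind_PUR_traj_initial:
  "measure_pmf.prob (bind_pmf p (PUR_traj k)) {tr. P (tr ! 0)} = measure_pmf.prob p {\<Phi>. P \<Phi>}"
proof -
  have "measure_pmf.prob (bind_pmf p (PUR_traj k)) {tr. P (tr ! 0)}
          = measure_pmf.prob (map_pmf (\<lambda>tr. tr ! 0) (bind_pmf p (PUR_traj k))) {\<Phi>. P \<Phi>}"
    by simp
  then show ?thesis by (simp only: map_pmf_nth_0_bind_PUR_traj)
qed

lemma prob_reaches_ge:
  assumes "n \<ge> 1" "T \<le> n" "n - T \<le> N"
    and "(real n + 1) * 2 ^ (n - T) / (real n * 2 ^ n) \<le> 1"
  shows "(1 / ((real n + 1) * 2 ^ n)) ^ (n - T)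
           * (1 - (real n + 1) * 2 ^ (n - T) / (real n * 2 ^ n)) ^ N
           \<le> measure_pmf.prob (bind_pmf (Omega n N) (PUR_traj n)) {tr. reaches n T tr}"
proof -
  let ?R = "bind_pmf (Omega n N) (PUR_traj n)"
  have "measure_pmf.prob ?R {tr. chain_formula n T (tr ! 0)}
          \<le> measure_pmf.prob ?R {tr. reaches n T tr}"
  proof (rule measure_pmf.finite_measure_mono_AE)
    show "AE tr in ?R. tr \<in> {tr. chain_formula n T (tr ! 0)} \<longrightarrow> tr \<in> {tr. reaches n T tr}"
      using assms(2) PUR_traj_nth_0
      by (auto intro!: AE_pmfI reaches_if_chain_formula simp: set_bind_pmf)
  qed simp
  then show ?thesis
    using prob_chain_formula_ge[OF assms(1,3,4)] by (simp add: prob_bind_PUR_traj_initial)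
qed

lemma prob_reaches_le_event_E:
  assumes n: "n \<ge> 1" and M: "real M \<le> 1 + 2 * (real N - 1) / real T"
  shows "measure_pmf.prob (bind_pmf (Omega n N) (PUR_traj n)) {tr. reaches n T tr}
           \<le> measure_pmf.prob (bind_pmf (Omega n N) (PUR_traj n)) {tr. event_E n T tr}
             + n * (1 + 1 / n) ^ N / 2 ^ Suc M"
proof -
  let ?R = "bind_pmf (Omega n N) (PUR_traj n)"
  let ?Bad = "{tr. \<exists>i. M < pos_occ i (tr ! 0)}"
  have "measure_pmf.prob ?R {tr. reaches n T tr}
          \<le> measure_pmf.prob ?R ({tr. event_E n T tr} \<union> ?Bad)"
  proof (rule measure_pmf.finite_measure_mono_AE)
    show "AE tr in ?R. tr \<in> {tr. reaches n T tr} \<longrightarrow> tr \<in> {tr. event_E n T tr} \<union> ?Bad"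
    proof (rule AE_pmfI, intro impI)
      fix tr assume tr: "tr \<in> set_pmf ?R" and reach: "tr \<in> {tr. reaches n T tr}"
      from tr obtain \<Phi> where \<Phi>: "\<Phi> \<in> set_pmf (Omega n N)" "tr \<in> set_pmf (PUR_traj n \<Phi>)"
        by (auto simp: set_bind_pmf)
      show "tr \<in> {tr. event_E n T tr} \<union> ?Bad"
      proof (cases "\<forall>i. pos_occ i \<Phi> \<le> M")
        case True
        have "real M \<le> 1 + 2 * (real (size \<Phi>) - 1) / real T"
          using M set_pmf_Omega(2)[OF n \<Phi>(1)] by simp
        then have "event_E n T tr"
          using event_E_if_pos_occ_le[OF \<Phi>(2)] reach True by blast
        then show ?thesis by simp
      next
        case False
        then show ?thesis using PUR_traj_nth_0[OF \<Phi>(2)] by (auto simp: not_le)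
      qed
    qed
  qed simp
  also have "\<dots> \<le> measure_pmf.prob ?R {tr. event_E n T tr} + measure_pmf.prob ?R ?Bad"
    by (rule measure_Un_le) simp_all
  also have "measure_pmf.prob ?R ?Bad \<le> n * (1 + 1 / n) ^ N / 2 ^ Suc M"
    using prob_ex_pos_occ_gt_le[OF n]
      prob_bind_PUR_traj_initial[of "Omega n N" n "\<lambda>\<Phi>. \<exists>i. M < pos_occ i \<Phi>"]
    by simp
  finally show ?thesis by simp
qed

section \<open>Asymptotics\<close>

lemma one_plus_inverse_power_div_two_power_le:
  assumes n: "n \<ge> 1" and K: "2 * real N / real n \<le> real K"
  shows "(1 + 1 / real n) ^ N / 2 ^ K \<le> exp (- (real N / (3 * real n)))"
proof -
  have "(1 + 1 / real n) ^ N \<le> exp (1 / real n) ^ N"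
    by (intro power_mono) (auto simp: add.commute)
  also have "\<dots> = exp (real N / real n)" by (simp flip: exp_of_nat_mult)
  finally have num: "(1 + 1 / real n) ^ N \<le> exp (real N / real n)" .
  have "exp (4 / 3 * (real N / real n)) \<le> exp (ln 2 * (2 * real N / real n))"
    using ln2_ge_two_thirds n
    by (intro exp_le_cancel_iff[THEN iffD2]) (simp add: field_simps mult_left_mono)
  also have "\<dots> \<le> exp (ln 2 * real K)"
    using K by (intro exp_le_cancel_iff[THEN iffD2] mult_left_mono) auto
  also have "\<dots> = 2 ^ K" by (subst mult.commute, subst exp_of_nat_mult) simp
  finally have den: "exp (4 / 3 * (real N / real n)) \<le> 2 ^ K" .
  have "(1 + 1 / real n) ^ N / 2 ^ K \<le> exp (real N / real n) / exp (4 / 3 * (real N / real n))"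
    using num den by (intro frac_le) auto
  also have "\<dots> = exp (- (real N / (3 * real n)))"
    by (simp flip: exp_diff)
  finally show ?thesis .
qed

lemma exp_le_power_mult_power:
  fixes B x :: real
  assumes B: "1 \<le> B" and x: "0 \<le> x" "x \<le> 1 / 2"
  shows "exp (- (real m * ln B) - 2 * x * real N) \<le> (1 / B) ^ m * (1 - x) ^ N"
proof -
  have "- x - 2 * x\<^sup>2 \<le> ln (1 - x)" using x by (rule ln_one_minus_pos_lower_bound)
  moreover have "2 * x\<^sup>2 \<le> x"
    using x mult_left_mono[of "2 * x" 1 x] by (simp add: power2_eq_square algebra_simps)
  ultimately have "- 2 * x \<le> ln (1 - x)" by linarith
  then have "real N * (- 2 * x) \<le> real N * ln (1 - x)" by (intro mult_left_mono) auto
  then have "exp (- 2 * x * real N) \<le> exp (real N * ln (1 - x))" by (simp add: mult.commute)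
  also have "\<dots> = (1 - x) ^ N" using x by (simp add: exp_of_nat_mult)
  finally have power: "exp (- 2 * x * real N) \<le> (1 - x) ^ N" .
  have "exp (- (real m * ln B)) = (1 / B) ^ m"
    using B by (simp add: exp_minus exp_of_nat_mult power_one_over inverse_eq_divide)
  moreover have "exp (- (real m * ln B) - 2 * x * real N)
                   = exp (- (real m * ln B)) * exp (- 2 * x * real N)"
    by (simp flip: exp_add)
  ultimately have "exp (- (real m * ln B) - 2 * x * real N) = (1 / B) ^ m * exp (- 2 * x * real N)"
    by simp
  also have "\<dots> \<le> (1 / B) ^ m * (1 - x) ^ N"
    using power B by (intro mult_left_mono) auto
  finally show ?thesis .
qed

lemma prob_reaches_ge_exp:
  assumes n: "n \<ge> 1" and T: "T \<le> n" "n - T + 2 \<le> n" and N: "n - T \<le> N"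
  shows "exp (- (real (n - T) * ln ((real n + 1) * 2 ^ n)) - 4 * 2 ^ (n - T) * real N / 2 ^ n)
           \<le> measure_pmf.prob (bind_pmf (Omega n N) (PUR_traj n)) {tr. reaches n T tr}"
proof -
  define m where "m = n - T"
  define x where "x = (real n + 1) * 2 ^ m / (real n * 2 ^ n)"
  have x_le: "x \<le> 2 * 2 ^ m / 2 ^ n"
    unfolding x_def using n by (simp add: field_simps)
  have "(2::real) ^ (m + 2) \<le> 2 ^ n" using T unfolding m_def by (intro power_increasing) auto
  then have "2 * 2 ^ m / 2 ^ n \<le> (1::real) / 2" by (simp add: field_simps)
  then have "x \<le> 1 / 2" using x_le by linarith
  then have x: "0 \<le> x" "x \<le> 1 / 2" unfolding x_def by simp_all
  have B: "1 \<le> (real n + 1) * 2 ^ n"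
    using mult_mono[of 1 "real n + 1" 1 "2 ^ n"] by (simp add: one_le_power)
  have "2 * x * real N \<le> 2 * (2 * 2 ^ m / 2 ^ n) * real N"
    using x_le by (intro mult_right_mono) auto
  also have "\<dots> = 4 * 2 ^ m * real N / 2 ^ n" by simp
  finally have "exp (- (real m * ln ((real n + 1) * 2 ^ n)) - 4 * 2 ^ m * real N / 2 ^ n)
                  \<le> exp (- (real m * ln ((real n + 1) * 2 ^ n)) - 2 * x * real N)"
    unfolding exp_le_cancel_iff by linarith
  also have "\<dots> \<le> (1 / ((real n + 1) * 2 ^ n)) ^ m * (1 - x) ^ N"
    by (rule exp_le_power_mult_power[OF B x])
  also have "\<dots> \<le> measure_pmf.prob (bind_pmf (Omega n N) (PUR_traj n)) {tr. reaches n T tr}"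
  proof -
    have "x \<le> 1" "T \<le> n" using x T by simp_all
    then show ?thesis using prob_reaches_ge[of n T N] n N unfolding x_def m_def by blast
  qed
  finally show ?thesis unfolding m_def .
qed

lemma prob_reaches_ge_exp_sqrt:
  assumes c: "c > 0" and n: "n \<ge> 1"
    and T: "T \<le> n" "real (n - T) \<le> c * sqrt (real n)" "n - T + 2 \<le> n"
    and N: "n - T \<le> N" "real N \<le> c * 2 ^ n"
  shows "exp (- (c * sqrt (real n) * ln ((real n + 1) * 2 ^ n))
              - 4 * c * 2 powr (c * sqrt (real n)))
           \<le> measure_pmf.prob (bind_pmf (Omega n N) (PUR_traj n)) {tr. reaches n T tr}"
proof -
  define m where "m = n - T"
  define B where "B = (real n + 1) * 2 ^ n"
  have "1 \<le> B"
    unfolding B_def using mult_mono[of 1 "real n + 1" 1 "2 ^ n"] by (simp add: one_le_power)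
  then have "real m * ln B \<le> c * sqrt (real n) * ln B"
    using T(2) unfolding m_def by (intro mult_right_mono) auto
  moreover have "4 * 2 ^ m * real N / 2 ^ n \<le> 4 * 2 ^ m * (c * 2 ^ n) / 2 ^ n"
    using N by (intro divide_right_mono mult_left_mono) auto
  moreover have "4 * 2 ^ m * (c * 2 ^ n) / 2 ^ n = 4 * c * 2 ^ m" by simp
  moreover have "4 * c * 2 ^ m \<le> 4 * c * 2 powr (c * sqrt (real n))"
    using c T(2) unfolding m_def by (intro mult_left_mono) (simp_all add: powr_realpow[symmetric])
  ultimately have "exp (- (c * sqrt (real n) * ln B) - 4 * c * 2 powr (c * sqrt (real n)))
                     \<le> exp (- (real m * ln B) - 4 * 2 ^ m * real N / 2 ^ n)"
    unfolding exp_le_cancel_iff by linarith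
  also have "\<dots> \<le> measure_pmf.prob (bind_pmf (Omega n N) (PUR_traj n)) {tr. reaches n T tr}"
    unfolding m_def B_def by (rule prob_reaches_ge_exp[OF n T(1) T(3) N(1)])
  finally show ?thesis unfolding B_def .
qed

lemma prob_reaches_le_event_E_exp:
  assumes n: "n \<ge> 2" and T: "1 \<le> T" "T \<le> n" and N: "1 \<le> N"
  shows "measure_pmf.prob (bind_pmf (Omega n N) (PUR_traj n)) {tr. reaches n T tr}
           \<le> measure_pmf.prob (bind_pmf (Omega n N) (PUR_traj n)) {tr. event_E n T tr}
             + n * exp (- (real N / (3 * real n)))"
proof -
  define M where "M = nat \<lfloor>2 * real N / real n\<rfloor>"
  have M: "real M \<le> 1 + 2 * (real N - 1) / real T"
  proof -
    have "real M \<le> 2 * real N / real n" unfolding M_def using n by simp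
    also have "\<dots> = 2 / real n + 2 * (real N - 1) / real n" using n by (simp add: field_simps)
    also have "\<dots> \<le> 1 + 2 * (real N - 1) / real T"
    proof (intro add_mono)
      show "2 / real n \<le> 1" using n by simp
      show "2 * (real N - 1) / real n \<le> 2 * (real N - 1) / real T"
        using N T by (intro divide_left_mono) auto
    qed
    finally show ?thesis .
  qed
  have "2 * real N / real n \<le> real (Suc M)"
    unfolding M_def by linarith
  then have "(1 + 1 / real n) ^ N / 2 ^ Suc M \<le> exp (- (real N / (3 * real n)))"
    using n by (intro one_plus_inverse_power_div_two_power_le) auto
  then have "real n * (1 + 1 / real n) ^ N / 2 ^ Suc M \<le> real n * exp (- (real N / (3 * real n)))"
    unfolding times_divide_eq_right[symmetric] by (rule mult_left_mono) simp
  moreover have "1 \<le> n" using n by simp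
  note prob_reaches_le_event_E[OF this M]
  ultimately show ?thesis by linarith
qed

lemma one_minus_divide_le_divide:
  fixes a b l u :: real
  assumes "0 < l" "l \<le> b" "b \<le> a + u" "0 \<le> u"
  shows "1 - u / l \<le> a / b"
proof -
  have "1 - u / l \<le> 1 - u / b" using assms by (simp add: frac_le)
  also have "\<dots> = (b - u) / b" using assms by (simp add: field_simps)
  also have "\<dots> \<le> a / b" using assms by (simp add: divide_right_mono)
  finally show ?thesis .
qed

text \<open>The bound on the bad event divided by the lower bound on reaching stage t.\<close>

definition error_bound :: "real \<Rightarrow> nat \<Rightarrow> real" where
  "error_bound c n = real n * exp (c * sqrt (real n) * ln ((real n + 1) * 2 ^ n)
      + 4 * c * 2 powr (c * sqrt (real n)) - (c * 2 ^ n - 1) / (3 * real n))"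

lemma error_bound_tendsto_0: "c > 0 \<Longrightarrow> error_bound c \<longlonglongrightarrow> 0"
  unfolding error_bound_def by real_asymp

lemma event_E_ratio_bounds:
  fixes c :: real and n T :: nat
  defines "N \<equiv> nat \<lfloor>c * 2 ^ n\<rfloor>"
  assumes c: "c > 0" and n: "n \<ge> 2"
    and T: "real n - c * sqrt (real n) \<le> real T" "T \<le> n"
    and big: "c * sqrt (real n) + 2 \<le> real n" "c * sqrt (real n) + 2 \<le> c * 2 ^ n - 1"
  shows "1 - error_bound c n \<le> measure_pmf.prob (PUR_run c n) {tr. event_E n T tr}
                              / measure_pmf.prob (PUR_run c n) {tr. reaches n T tr}"
    and "measure_pmf.prob (PUR_run c n) {tr. event_E n T tr}
           / measure_pmf.prob (PUR_run c n) {tr. reaches n T tr} \<le> 1"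
proof -
  define m where "m = n - T"
  define B where "B = (real n + 1) * 2 ^ n"
  define PR where "PR = measure_pmf.prob (PUR_run c n) {tr. reaches n T tr}"
  define PE where "PE = measure_pmf.prob (PUR_run c n) {tr. event_E n T tr}"
  define L where "L = exp (- (c * sqrt (real n) * ln B) - 4 * c * 2 powr (c * sqrt (real n)))"
  define U where "U = real n * exp (- ((c * 2 ^ n - 1) / (3 * real n)))"
  have m: "real m \<le> c * sqrt (real n)" "m + 2 \<le> n" "1 \<le> T"
    using T big unfolding m_def by (simp_all add: of_nat_diff)
  have "0 < c * 2 ^ n" "0 \<le> c * sqrt (real n)" using c by simp_all
  then have N: "c * 2 ^ n - 1 \<le> real N" "real N \<le> c * 2 ^ n" "1 \<le> real N"
    using big unfolding N_def by linarith+
  have "1 \<le> N" "m \<le> N" using N m big by linarith+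
  have run: "PUR_run c n = bind_pmf (Omega n N) (PUR_traj n)"
    unfolding PUR_run_def N_def ..
  have L_le: "L \<le> PR"
  proof -
    have "1 \<le> n" "real (n - T) \<le> c * sqrt (real n)" "n - T + 2 \<le> n" "n - T \<le> N"
      using n m \<open>m \<le> N\<close> unfolding m_def by simp_all
    from prob_reaches_ge_exp_sqrt[OF c this(1) T(2) this(2-4) N(2)] show ?thesis
      unfolding L_def B_def PR_def run .
  qed
  have PR_le: "PR \<le> PE + U"
  proof -
    have "PR \<le> PE + real n * exp (- (real N / (3 * real n)))"
      unfolding PR_def PE_def run using n m(3) T(2) \<open>1 \<le> N\<close> by (rule prob_reaches_le_event_E_exp)
    moreover have "real n * exp (- (real N / (3 * real n))) \<le> U"
      unfolding U_def using N n
      by (intro mult_left_mono exp_le_cancel_iff[THEN iffD2] le_imp_neg_le divide_right_mono) auto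
    ultimately show ?thesis by linarith
  qed
  have "U / L = real n * exp (- ((c * 2 ^ n - 1) / (3 * real n))
                  - (- (c * sqrt (real n) * ln B) - 4 * c * 2 powr (c * sqrt (real n))))"
    unfolding U_def L_def by (simp only: times_divide_eq_right[symmetric] exp_diff[symmetric])
  also have "\<dots> = error_bound c n"
    unfolding error_bound_def B_def by (simp add: algebra_simps)
  finally have UL: "U / L = error_bound c n" .
  have L_pos: "0 < L" unfolding L_def by simp
  have "1 - U / L \<le> PE / PR"
    using L_pos L_le PR_le by (rule one_minus_divide_le_divide) (simp add: U_def)
  then show "1 - error_bound c n \<le> PE / PR" unfolding UL .
  have "PE \<le> PR"
    unfolding PE_def PR_def event_E_def by (rule measure_pmf.finite_measure_mono) auto
  then show "PE / PR \<le> 1" using L_pos L_le by simp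
qed

theorem mainTheorem4:
  fixes c :: real and t :: "nat \<Rightarrow> nat"
  assumes "c > 0"
    and "\<And>n. real n - c * sqrt (real n) \<le> real (t n) \<and> t n \<le> n"
  shows "(\<lambda>n. measure_pmf.prob (PUR_run c n) {tr. event_E n (t n) tr}
              / measure_pmf.prob (PUR_run c n) {tr. reaches n (t n) tr})
         \<longlonglongrightarrow> 1"
proof (rule tendsto_sandwich)
  let ?ratio = "\<lambda>n. measure_pmf.prob (PUR_run c n) {tr. event_E n (t n) tr}
                    / measure_pmf.prob (PUR_run c n) {tr. reaches n (t n) tr}"
  have "\<forall>\<^sub>F n in sequentially. c * sqrt (real n) + 2 \<le> real n"
    "\<forall>\<^sub>F n in sequentially. c * sqrt (real n) + 2 \<le> c * 2 ^ n - 1"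
    using assms(1) by real_asymp+
  then have large: "\<forall>\<^sub>F n in sequentially. 2 \<le> n \<and> c * sqrt (real n) + 2 \<le> real n
                                      \<and> c * sqrt (real n) + 2 \<le> c * 2 ^ n - 1"
    by (intro eventually_conj eventually_ge_at_top)
  have bounds: "1 - error_bound c n \<le> ?ratio n \<and> ?ratio n \<le> 1"
    if "2 \<le> n \<and> c * sqrt (real n) + 2 \<le> real n \<and> c * sqrt (real n) + 2 \<le> c * 2 ^ n - 1" for n
    using that assms(2)[of n] event_E_ratio_bounds[OF assms(1), of n "t n"] by blast
  show "\<forall>\<^sub>F n in sequentially. 1 - error_bound c n \<le> ?ratio n"
    using large by (rule eventually_mono) (use bounds in blast)
  show "\<forall>\<^sub>F n in sequentially. ?ratio n \<le> 1"
    using large by (rule eventually_mono) (use bounds in blast)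
  show "(\<lambda>n. 1 - error_bound c n) \<longlonglongrightarrow> 1"
    using tendsto_diff[OF tendsto_const error_bound_tendsto_0[OF assms(1)], of 1] by simp
qed simp

end
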